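(* Let $q=p^a$ with $p$ prime, $\mathcal V=\mathbb F_q$ (so $v=q$), and let $G=N.L\le{\rm A\Gamma L}(1,q)$, where $N$ is the group of all translations of $\mathcal V$ and $L\le{\rm \Gamma L}(1,q)$ is transitive on $\mathcal V\setminus\{0\}$. Let $\gamma\subset\mathcal V$ with $|\gamma|=k$, $1\le k\le v-1$, such that $G_\gamma$ is transitive on $\gamma\times(\mathcal V\setminus\gamma)$, and set $M=G_\gamma\cap N$. Then $k\in\{1,v-1\}$ if and only if $M=1$. *)

theory Defs
  imports "HOL-Computational_Algebra.Primes" "HOL-Library.Cardinality"
begin

definition field_aut :: "('a::field \<Rightarrow> 'a) \<Rightarrow> bool" where
  "field_aut \<sigma> \<longleftrightarrow> bij \<sigma> \<and> (\<forall>x y. \<sigma> (x + y) = \<sigma> x + \<sigma> y) \<and> (\<forall>x y. \<sigma> (x * y) = \<sigma> x * \<sigma> y)"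

definition GammaL1 :: "('a::field \<Rightarrow> 'a) set" where
  "GammaL1 = {f. \<exists>a \<sigma>. a \<noteq> 0 \<and> field_aut \<sigma> \<and> f = (\<lambda>x. a * \<sigma> x)}"

definition transl_group :: "('a::ab_group_add \<Rightarrow> 'a) set" where
  "transl_group = {f. \<exists>b. f = (\<lambda>x. x + b)}"

definition perm_subgroup :: "('a \<Rightarrow> 'a) set \<Rightarrow> bool" where
  "perm_subgroup H \<longleftrightarrow> (\<forall>f\<in>H. bij f) \<and> id \<in> H \<and> (\<forall>f\<in>H. \<forall>g\<in>H. f \<circ> g \<in> H)
     \<and> (\<forall>f\<in>H. inv f \<in> H)"

definition transl_ext :: "('a::ab_group_add \<Rightarrow> 'a) set \<Rightarrow> ('a \<Rightarrow> 'a) set" where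
  "transl_ext L = {g. \<exists>f\<in>L. \<exists>b. g = (\<lambda>x. f x + b)}"

definition set_stab :: "('a \<Rightarrow> 'a) set \<Rightarrow> 'a set \<Rightarrow> ('a \<Rightarrow> 'a) set" where
  "set_stab G \<gamma> = {g\<in>G. g ` \<gamma> = \<gamma>}"

definition transitive_on_pairs :: "('a \<Rightarrow> 'a) set \<Rightarrow> 'a set \<Rightarrow> 'a set \<Rightarrow> bool" where
  "transitive_on_pairs H A B \<longleftrightarrow>
     (\<forall>x\<in>A. \<forall>y\<in>B. \<forall>x'\<in>A. \<forall>y'\<in>B. \<exists>g\<in>H. g x = x' \<and> g y = y')"

end

theory Submission
  imports Defs "HOL-Algebra.Algebraic_Closure_Type"
begin

(* Let H = G_\<gamma>. A translation fixing a set of size 1 or of co-size 1 fixes a point, so it is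
   trivial. Conversely, let H contain no nontrivial translation and 2 \<le> k \<le> v - 2. Affine
   elements of H commute, since their commutator is a translation. So if H contains an affine
   h \<noteq> 1, z \<mapsto> \<alpha> z + \<beta>, then \<alpha> \<noteq> 1, h has a unique fixed point c, every conjugate g h g\<inverse>
   (again affine) commutes with h, and hence every g \<in> H fixes c; this contradicts transitivity
   on \<gamma> \<times> (V - \<gamma>). Otherwise the field-automorphism part of g determines g \<in> H, and an
   automorphism is determined by its value at a generator of the multiplicative group, so
   |H| \<le> v - 1 < k (v - k), again contradicting transitivity on pairs. *)

hide_const (open) Divisibility.prime

lemma field_aut_bij: "field_aut \<sigma> \<Longrightarrow> bij \<sigma>"
  unfolding field_aut_def by blast

lemma field_aut_add: "field_aut \<sigma> \<Longrightarrow> \<sigma> (x + y) = \<sigma> x + \<sigma> y"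
  unfolding field_aut_def by blast

lemma field_aut_mult: "field_aut \<sigma> \<Longrightarrow> \<sigma> (x * y) = \<sigma> x * \<sigma> y"
  unfolding field_aut_def by blast

lemma field_aut_0: "field_aut \<sigma> \<Longrightarrow> \<sigma> 0 = 0"
  using field_aut_add[of \<sigma> 0 0] by (metis add_0 add_cancel_left_right)

lemma field_aut_eq_iff: "field_aut \<sigma> \<Longrightarrow> \<sigma> x = \<sigma> y \<longleftrightarrow> x = y"
  by (meson bij_is_inj field_aut_bij injD)

lemma field_aut_eq_0_iff: "field_aut \<sigma> \<Longrightarrow> \<sigma> x = 0 \<longleftrightarrow> x = 0"
  by (metis field_aut_0 field_aut_eq_iff)

lemma field_aut_1: "field_aut \<sigma> \<Longrightarrow> \<sigma> 1 = 1"
  using field_aut_mult[of \<sigma> 1 1] field_aut_eq_0_iff[of \<sigma> 1] by simp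

lemma field_aut_power: "field_aut \<sigma> \<Longrightarrow> \<sigma> (x ^ n) = \<sigma> x ^ n"
  by (induction n) (simp_all add: field_aut_1 field_aut_mult)

lemma field_aut_eqI_generator:
  assumes "field_aut \<sigma>" "field_aut \<tau>" "\<forall>z. z \<noteq> 0 \<longrightarrow> (\<exists>n. z = \<omega> ^ n)" "\<sigma> \<omega> = \<tau> \<omega>"
  shows "\<sigma> = \<tau>"
proof
  fix z
  show "\<sigma> z = \<tau> z"
    using assms by (cases "z = 0") (auto simp: field_aut_0 field_aut_power)
qed

lemma finite_field_mult_generator:
  "\<exists>\<omega>::'a::{finite,field}. \<omega> \<noteq> 0 \<and> (\<forall>z. z \<noteq> 0 \<longrightarrow> (\<exists>n::nat. z = \<omega> ^ n))"
proof -
  let ?R = "ring_of_type_algebra :: 'a ring"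
  interpret R: field ?R by (rule field_from_type_algebra)
  have power: "x [^]\<^bsub>?R\<^esub> (n::nat) = x ^ n" for x :: 'a and n
    by (induction n) (simp_all add: ring_of_type_algebra_def mult.commute)
  have "\<exists>\<omega>\<in>carrier ?R - {\<zero>\<^bsub>?R\<^esub>}. carrier ?R - {\<zero>\<^bsub>?R\<^esub>} = {\<omega> [^]\<^bsub>?R\<^esub> i | i::nat. i \<in> UNIV}"
    using R.finite_field_mult_group_has_gen by (simp add: ring_of_type_algebra_def)
  then obtain \<omega> where \<omega>: "\<omega> \<in> carrier ?R - {\<zero>\<^bsub>?R\<^esub>}"
      "carrier ?R - {\<zero>\<^bsub>?R\<^esub>} = {\<omega> [^]\<^bsub>?R\<^esub> i | i::nat. i \<in> UNIV}"
    by blast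
  have "\<exists>n::nat. z = \<omega> ^ n" if "z \<noteq> 0" for z
  proof -
    have "z \<in> carrier ?R - {\<zero>\<^bsub>?R\<^esub>}" using that by (simp add: ring_of_type_algebra_def)
    then obtain i :: nat where "z = \<omega> [^]\<^bsub>?R\<^esub> i" using \<omega>(2) by blast
    then show ?thesis using power[of \<omega> i] by blast
  qed
  moreover have "\<omega> \<noteq> 0" using \<omega>(1) by (simp add: ring_of_type_algebra_def)
  ultimately show ?thesis by blast
qed

lemma GammaL1_add: "f \<in> GammaL1 \<Longrightarrow> f (x + y) = f x + f y"
  unfolding GammaL1_def by (auto simp: field_aut_add distrib_left)

lemma GammaL1_diff: "f \<in> GammaL1 \<Longrightarrow> f (x - y) = f x - f y"
  by (metis GammaL1_add diff_add_cancel eq_diff_eq)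

lemma transl_ext_mono: "L \<subseteq> L' \<Longrightarrow> transl_ext L \<subseteq> transl_ext L'"
  unfolding transl_ext_def by blast

lemma transl_ext_GammaL1_iff:
  "g \<in> transl_ext GammaL1 \<longleftrightarrow> (\<exists>a \<sigma> b. a \<noteq> 0 \<and> field_aut \<sigma> \<and> g = (\<lambda>x. a * \<sigma> x + b))"
proof
  assume "\<exists>a \<sigma> b. a \<noteq> 0 \<and> field_aut \<sigma> \<and> g = (\<lambda>x. a * \<sigma> x + b)"
  then obtain a \<sigma> b where "a \<noteq> 0" "field_aut \<sigma>" "g = (\<lambda>x. a * \<sigma> x + b)" by blast
  then show "g \<in> transl_ext GammaL1"
    unfolding transl_ext_def GammaL1_def by (auto intro!: bexI[of _ "\<lambda>x. a * \<sigma> x"])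
qed (auto simp: transl_ext_def GammaL1_def)

lemma bij_transl_ext_GammaL1:
  assumes "g \<in> transl_ext GammaL1"
  shows "bij g"
proof -
  obtain a \<sigma> b where g: "a \<noteq> 0" "field_aut \<sigma>" "g = (\<lambda>x. a * \<sigma> x + b)"
    using assms by (auto simp: transl_ext_GammaL1_iff)
  have "bij (\<lambda>x. a * x + b)"
    by (rule o_bij[where g = "\<lambda>y. (y - b) / a"]) (use g(1) in \<open>auto simp: fun_eq_iff\<close>)
  then have "bij ((\<lambda>x. a * x + b) \<circ> \<sigma>)"
    using g(2) field_aut_bij bij_comp by blast
  then show ?thesis by (simp add: g(3) comp_def)
qed

lemma inv_add_const:
  fixes f :: "'a \<Rightarrow> 'b::ab_group_add"
  assumes "bij f"
  shows "inv_into UNIV (\<lambda>x. f x + b) = (\<lambda>y. inv_into UNIV f (y - b))"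
  by (rule inv_equality) (use assms in \<open>auto simp: bij_is_inj bij_is_surj surj_f_inv_f\<close>)

lemma perm_subgroup_transl_ext:
  assumes L: "perm_subgroup L" "L \<subseteq> GammaL1"
  shows "perm_subgroup (transl_ext L)"
  unfolding perm_subgroup_def
proof (intro conjI ballI)
  fix g assume "g \<in> transl_ext L"
  then obtain f b where f: "f \<in> L" "g = (\<lambda>x. f x + b)"
    unfolding transl_ext_def by blast
  have "bij f" using f(1) L(1) unfolding perm_subgroup_def by blast
  then have "bij ((\<lambda>x. x + b) \<circ> f)"
    using bij_plus_right bij_comp by blast
  then show "bij g" by (simp add: f(2) comp_def)
  have "inv_into UNIV f \<in> L" using f(1) L(1) unfolding perm_subgroup_def by blast
  moreover have "inv_into UNIV g = (\<lambda>y. inv_into UNIV f y + - inv_into UNIV f b)"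
    using \<open>bij f\<close> \<open>inv_into UNIV f \<in> L\<close> L(2) by (auto simp: f(2) inv_add_const GammaL1_diff)
  ultimately show "inv_into UNIV g \<in> transl_ext L"
    unfolding transl_ext_def by blast
next
  show "id \<in> transl_ext L"
    using L(1) unfolding perm_subgroup_def transl_ext_def by (auto intro!: bexI[of _ id] exI[of _ 0])
next
  fix g1 g2 assume "g1 \<in> transl_ext L" "g2 \<in> transl_ext L"
  then obtain f1 b1 f2 b2 where f: "f1 \<in> L" "g1 = (\<lambda>x. f1 x + b1)" "f2 \<in> L" "g2 = (\<lambda>x. f2 x + b2)"
    unfolding transl_ext_def by blast
  have "f1 \<in> GammaL1" using f(1) L(2) by blast
  then have "g1 \<circ> g2 = (\<lambda>x. (f1 \<circ> f2) x + (f1 b2 + b1))"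
    by (simp add: fun_eq_iff f(2,4) GammaL1_add add.assoc)
  moreover have "f1 \<circ> f2 \<in> L" using f L(1) unfolding perm_subgroup_def by blast
  ultimately show "g1 \<circ> g2 \<in> transl_ext L"
    unfolding transl_ext_def by blast
qed

lemma perm_subgroup_set_stab:
  assumes "perm_subgroup G"
  shows "perm_subgroup (set_stab G \<gamma>)"
  unfolding perm_subgroup_def
proof (intro conjI ballI)
  show "id \<in> set_stab G \<gamma>"
    using assms unfolding perm_subgroup_def set_stab_def by simp
next
  fix f g assume fg: "f \<in> set_stab G \<gamma>" "g \<in> set_stab G \<gamma>"
  then have "(f \<circ> g) ` \<gamma> = \<gamma>"
    using image_comp[of f g \<gamma>] unfolding set_stab_def by simp
  then show "f \<circ> g \<in> set_stab G \<gamma>"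
    using fg assms unfolding perm_subgroup_def set_stab_def by blast
next
  fix f assume f: "f \<in> set_stab G \<gamma>"
  then show "bij f" using assms unfolding perm_subgroup_def set_stab_def by blast
  then have "inv_into UNIV f ` \<gamma> = \<gamma>"
    using f image_inv_f_f[of f \<gamma>] unfolding set_stab_def by (simp add: bij_is_inj)
  then show "inv_into UNIV f \<in> set_stab G \<gamma>"
    using f assms unfolding perm_subgroup_def set_stab_def by blast
qed

lemma set_stab_inter_transl_group_trivial:
  fixes \<gamma> :: "'a::ab_group_add set"
  assumes "card \<gamma> = 1 \<or> card (UNIV - \<gamma>) = 1"
  shows "set_stab G \<gamma> \<inter> transl_group \<subseteq> {id}"
proof
  fix g assume "g \<in> set_stab G \<gamma> \<inter> transl_group"
  then obtain b where g: "g = (\<lambda>x. x + b)" and stable: "(\<lambda>x. x + b) ` \<gamma> = \<gamma>"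
    unfolding set_stab_def transl_group_def by blast
  have "(\<lambda>x. x + b) ` (UNIV - \<gamma>) = UNIV - \<gamma>"
    using stable by (simp add: Compl_eq_Diff_UNIV[symmetric] bij_image_Compl_eq[OF bij_plus_right])
  moreover obtain x0 where "\<gamma> = {x0} \<or> UNIV - \<gamma> = {x0}"
    using assms by (auto simp: card_1_singleton_iff)
  ultimately have "x0 + b = x0"
    using stable by auto
  then show "g \<in> {id}" by (simp add: g fun_eq_iff)
qed

lemma translation_free_eqI:
  assumes H: "perm_subgroup H" "H \<inter> transl_group = {id}"
    and "f1 \<in> H" "f2 \<in> H" "\<And>z. f1 z = f2 z + d"
  shows "d = 0"
proof -
  have "bij f2" using H(1) assms(4) unfolding perm_subgroup_def by blast
  then have "f1 \<circ> inv_into UNIV f2 = (\<lambda>y. y + d)"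
    using assms(5) by (simp add: fun_eq_iff bij_is_surj surj_f_inv_f)
  moreover have "f1 \<circ> inv_into UNIV f2 \<in> H"
    using H(1) assms(3,4) unfolding perm_subgroup_def by blast
  moreover have "(\<lambda>y. y + d) \<in> transl_group"
    unfolding transl_group_def by blast
  ultimately have "(\<lambda>y. y + d) \<in> H \<inter> transl_group" by simp
  then have "(\<lambda>y. y + d) = id" using H(2) by simp
  then show ?thesis by (metis add_0 id_apply)
qed

definition AGL1 :: "('a::field \<Rightarrow> 'a) set" where
  "AGL1 = {h. \<exists>\<alpha> \<beta>. \<alpha> \<noteq> 0 \<and> h = (\<lambda>z. \<alpha> * z + \<beta>)}"

lemma id_AGL1: "id \<in> AGL1"
  unfolding AGL1_def by (rule CollectI, rule exI[of _ 1], rule exI[of _ 0]) auto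

lemma affine_fixed_point_iff:
  fixes \<alpha> :: "'a::field"
  assumes "\<alpha> \<noteq> 1"
  shows "\<alpha> * z + \<beta> = z \<longleftrightarrow> z = \<beta> / (1 - \<alpha>)"
  using assms by (auto simp: field_simps)

lemma conj_AGL1:
  assumes "g \<in> transl_ext GammaL1" "h \<in> AGL1"
  shows "g \<circ> h \<circ> inv_into UNIV g \<in> AGL1"
proof -
  obtain a \<sigma> b where g: "a \<noteq> 0" "field_aut \<sigma>" "g = (\<lambda>x. a * \<sigma> x + b)"
    using assms(1) by (auto simp: transl_ext_GammaL1_iff)
  obtain \<alpha> \<beta> where h: "\<alpha> \<noteq> 0" "h = (\<lambda>z. \<alpha> * z + \<beta>)"
    using assms(2) unfolding AGL1_def by blast
  have "(g \<circ> h \<circ> inv_into UNIV g) y = \<sigma> \<alpha> * y + (a * \<sigma> \<beta> + b - \<sigma> \<alpha> * b)" for y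
  proof -
    define w where "w = inv_into UNIV g y"
    have "g w = y"
      using bij_transl_ext_GammaL1[OF assms(1)] by (simp add: w_def bij_is_surj surj_f_inv_f)
    then have gw: "a * \<sigma> w = y - b" by (simp add: g(3) eq_diff_eq)
    have "(g \<circ> h \<circ> inv_into UNIV g) y = a * \<sigma> (\<alpha> * w + \<beta>) + b"
      by (simp add: w_def g(3) h(2))
    also have "\<dots> = \<sigma> \<alpha> * (a * \<sigma> w) + (a * \<sigma> \<beta> + b)"
      using g(2) by (simp add: field_aut_add field_aut_mult algebra_simps)
    finally show ?thesis by (simp add: gw algebra_simps)
  qed
  moreover have "\<sigma> \<alpha> \<noteq> 0" using g(2) h(1) by (simp add: field_aut_eq_0_iff)
  ultimately show ?thesis
    unfolding AGL1_def by blast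
qed

lemma translation_free_AGL1_commute:
  assumes H: "perm_subgroup H" "H \<inter> transl_group = {id}"
    and "h1 \<in> H \<inter> AGL1" "h2 \<in> H \<inter> AGL1"
  shows "h1 \<circ> h2 = h2 \<circ> h1"
proof -
  obtain \<alpha>1 \<beta>1 \<alpha>2 \<beta>2 where h: "h1 = (\<lambda>z. \<alpha>1 * z + \<beta>1)" "h2 = (\<lambda>z. \<alpha>2 * z + \<beta>2)"
    using assms(3,4) unfolding AGL1_def by blast
  let ?d = "\<alpha>1 * \<beta>2 + \<beta>1 - \<alpha>2 * \<beta>1 - \<beta>2"
  have "(h1 \<circ> h2) z = (h2 \<circ> h1) z + ?d" for z
    by (simp add: h algebra_simps)
  moreover have "h1 \<circ> h2 \<in> H" "h2 \<circ> h1 \<in> H"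
    using H(1) assms(3,4) unfolding perm_subgroup_def by blast+
  ultimately have "?d = 0" by (rule translation_free_eqI[OF H, rotated 2])
  then show ?thesis
    by (auto simp: h algebra_simps)
qed

lemma translation_free_common_fixed_point:
  assumes H: "perm_subgroup H" "H \<subseteq> transl_ext GammaL1" "H \<inter> transl_group = {id}"
    and h: "h \<in> H \<inter> AGL1" "h \<noteq> id"
  shows "\<exists>c. \<forall>g\<in>H. g c = c"
proof -
  obtain \<alpha> \<beta> where h_eq: "h = (\<lambda>z. \<alpha> * z + \<beta>)"
    using h(1) unfolding AGL1_def by blast
  have "\<alpha> \<noteq> 1"
  proof
    assume "\<alpha> = 1"
    then have "\<beta> = 0"
      using translation_free_eqI[OF H(1,3), of h id \<beta>] h(1) H(1)
      unfolding perm_subgroup_def by (auto simp: h_eq)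
    then show False using h(2) \<open>\<alpha> = 1\<close> by (auto simp: h_eq)
  qed
  define c where "c = \<beta> / (1 - \<alpha>)"
  have fix_h: "h z = z \<longleftrightarrow> z = c" for z
    using affine_fixed_point_iff[OF \<open>\<alpha> \<noteq> 1\<close>] by (simp add: h_eq c_def)
  have "g c = c" if g: "g \<in> H" for g
  proof -
    let ?k = "g \<circ> h \<circ> inv_into UNIV g"
    have "?k \<in> H \<inter> AGL1"
      using H g h(1) conj_AGL1 unfolding perm_subgroup_def by blast
    then have "h (?k c) = ?k (h c)"
      using translation_free_AGL1_commute[OF H(1,3) h(1)] by (metis comp_apply)
    moreover have "h c = c" using fix_h by simp
    ultimately have "?k c = c" using fix_h by metis
    moreover have "bij g" using H(1) g unfolding perm_subgroup_def by blast
    ultimately have "h (inv_into UNIV g c) = inv_into UNIV g c"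
      by (metis bij_inv_eq_iff comp_apply)
    then show ?thesis
      using fix_h \<open>bij g\<close> by (metis bij_inv_eq_iff)
  qed
  then show ?thesis by blast
qed

definition aut_part :: "('a::field \<Rightarrow> 'a) \<Rightarrow> 'a \<Rightarrow> 'a" where
  "aut_part g x = (g x - g 0) / (g 1 - g 0)"

lemma aut_part_eq:
  assumes "a \<noteq> 0" "field_aut \<sigma>"
  shows "aut_part (\<lambda>x. a * \<sigma> x + b) = \<sigma>"
  using assms by (auto simp: aut_part_def field_aut_0 field_aut_1)

lemma aut_part_eq_imp_AGL1:
  assumes "g1 \<in> transl_ext GammaL1" "g2 \<in> transl_ext GammaL1" "aut_part g1 = aut_part g2"
  shows "g1 \<circ> inv_into UNIV g2 \<in> AGL1"
proof -
  obtain a1 \<sigma>1 b1 where g1: "a1 \<noteq> 0" "field_aut \<sigma>1" "g1 = (\<lambda>x. a1 * \<sigma>1 x + b1)"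
    using assms(1) by (auto simp: transl_ext_GammaL1_iff)
  obtain a2 \<sigma>2 b2 where g2: "a2 \<noteq> 0" "field_aut \<sigma>2" "g2 = (\<lambda>x. a2 * \<sigma>2 x + b2)"
    using assms(2) by (auto simp: transl_ext_GammaL1_iff)
  have "\<sigma>1 = \<sigma>2" using assms(3) g1 g2 by (simp add: aut_part_eq)
  have "(g1 \<circ> inv_into UNIV g2) y = (a1 / a2) * y + (b1 - a1 / a2 * b2)" for y
  proof -
    define w where "w = inv_into UNIV g2 y"
    have "g2 w = y"
      using bij_transl_ext_GammaL1[OF assms(2)] by (simp add: w_def bij_is_surj surj_f_inv_f)
    then have g2w: "\<sigma>2 w = (y - b2) / a2"
      using g2(1) by (simp add: g2(3) field_simps)
    have "(g1 \<circ> inv_into UNIV g2) y = a1 * \<sigma>2 w + b1"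
      by (simp add: w_def g1(3) \<open>\<sigma>1 = \<sigma>2\<close>)
    then show ?thesis
      by (simp add: g2w diff_divide_distrib algebra_simps)
  qed
  then show ?thesis
    using g1(1) g2(1) unfolding AGL1_def
    by (intro CollectI exI[of _ "a1 / a2"] exI[of _ "b1 - a1 / a2 * b2"]) (auto simp: fun_eq_iff)
qed

lemma card_AGL1_free_subgroup_le:
  fixes H :: "('a::{finite,field} \<Rightarrow> 'a) set"
  assumes H: "perm_subgroup H" "H \<subseteq> transl_ext GammaL1" "H \<inter> AGL1 = {id}"
  shows "card H \<le> CARD('a) - 1"
proof -
  obtain \<omega> :: 'a where "\<omega> \<noteq> 0" and \<omega>: "\<forall>z. z \<noteq> 0 \<longrightarrow> (\<exists>n::nat. z = \<omega> ^ n)"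
    using finite_field_mult_generator by blast
  have aut: "\<exists>a \<sigma> b. a \<noteq> 0 \<and> field_aut \<sigma> \<and> g = (\<lambda>x. a * \<sigma> x + b)" if "g \<in> H" for g
    using that H(2) by (auto simp: transl_ext_GammaL1_iff)
  have "inj_on (\<lambda>g. aut_part g \<omega>) H"
  proof (rule inj_onI)
    fix g1 g2 assume g: "g1 \<in> H" "g2 \<in> H" "aut_part g1 \<omega> = aut_part g2 \<omega>"
    obtain a1 \<sigma>1 b1 a2 \<sigma>2 b2 where
      g12: "a1 \<noteq> 0" "field_aut \<sigma>1" "g1 = (\<lambda>x. a1 * \<sigma>1 x + b1)"
        "a2 \<noteq> 0" "field_aut \<sigma>2" "g2 = (\<lambda>x. a2 * \<sigma>2 x + b2)"
      using aut[OF g(1)] aut[OF g(2)] by blast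
    then have "\<sigma>1 = \<sigma>2"
      using g(3) \<omega> by (intro field_aut_eqI_generator) (simp_all add: aut_part_eq)
    then have "aut_part g1 = aut_part g2"
      using g12 by (simp add: aut_part_eq)
    then have "g1 \<circ> inv_into UNIV g2 \<in> AGL1"
      using g(1,2) H(2) by (intro aut_part_eq_imp_AGL1) auto
    moreover have "g1 \<circ> inv_into UNIV g2 \<in> H"
      using g(1,2) H(1) unfolding perm_subgroup_def by blast
    ultimately have "g1 \<circ> inv_into UNIV g2 = id"
      using H(3) by (metis IntI singletonD)
    moreover have "bij g2" using g(2) H(1) unfolding perm_subgroup_def by blast
    ultimately show "g1 = g2"
      by (metis bij_is_inj comp_assoc comp_id id_comp inv_o_cancel)
  qed
  moreover have "(\<lambda>g. aut_part g \<omega>) ` H \<subseteq> UNIV - {0}"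
  proof
    fix t assume "t \<in> (\<lambda>g. aut_part g \<omega>) ` H"
    then obtain g where "g \<in> H" "t = aut_part g \<omega>" by blast
    moreover obtain a \<sigma> b where "a \<noteq> 0" "field_aut \<sigma>" "g = (\<lambda>x. a * \<sigma> x + b)"
      using aut[OF \<open>g \<in> H\<close>] by blast
    ultimately show "t \<in> UNIV - {0}"
      using \<open>\<omega> \<noteq> 0\<close> by (simp add: aut_part_eq field_aut_eq_0_iff)
  qed
  ultimately have "card H \<le> card (UNIV - {0::'a})"
    by (rule card_inj_on_le) simp
  then show ?thesis by (simp add: card_Diff_singleton)
qed

lemma card_le_if_transitive_on_pairs:
  assumes "finite H" "transitive_on_pairs H A B"
  shows "card A * card B \<le> card H"
proof (cases "A = {} \<or> B = {}")
  case False
  then obtain x y where "x \<in> A" "y \<in> B" by blast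
  then have "A \<times> B \<subseteq> (\<lambda>g. (g x, g y)) ` H"
    using assms(2) unfolding transitive_on_pairs_def by fast
  then have "card (A \<times> B) \<le> card H"
    by (meson assms(1) card_image_le card_mono finite_imageI order_trans)
  then show ?thesis by (simp add: card_cartesian_product)
qed auto

lemma transitive_on_pairs_moves_point:
  assumes "transitive_on_pairs H A B" "c \<in> A \<union> B" "2 \<le> card A" "2 \<le> card B"
  shows "\<exists>g\<in>H. g c \<noteq> c"
proof -
  have "\<exists>x\<in>S. x \<noteq> c" if "2 \<le> card S" for S :: "'a set"
  proof (rule ccontr)
    assume "\<not> (\<exists>x\<in>S. x \<noteq> c)"
    then have "card S \<le> card {c}" by (intro card_mono) auto
    then show False using that by simp
  qed
  then obtain x y where xy: "x \<in> A" "y \<in> B" "x \<noteq> c" "y \<noteq> c"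
    using assms(3,4) by meson
  have trans: "\<exists>g\<in>H. g x = x' \<and> g y = y'" if "x \<in> A" "y \<in> B" "x' \<in> A" "y' \<in> B" for x y x' y'
    using assms(1) that unfolding transitive_on_pairs_def by blast
  show ?thesis
  proof (cases "c \<in> A")
    case True
    then show ?thesis using trans[OF True xy(2) xy(1) xy(2)] xy(3) by auto
  next
    case False
    then have "c \<in> B" using assms(2) by blast
    show ?thesis using trans[OF xy(1) \<open>c \<in> B\<close> xy(1) xy(2)] xy(4) by auto
  qed
qed

lemma translation_free_transitive_on_pairs:
  fixes H :: "('a::{finite,field} \<Rightarrow> 'a) set"
  assumes H: "perm_subgroup H" "H \<subseteq> transl_ext GammaL1" "H \<inter> transl_group = {id}"
    and trans: "transitive_on_pairs H \<gamma> (UNIV - \<gamma>)"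
  shows "card \<gamma> \<le> 1 \<or> card (UNIV - \<gamma>) \<le> 1"
proof (rule ccontr)
  assume "\<not> ?thesis"
  then have k: "2 \<le> card \<gamma>" "2 \<le> card (UNIV - \<gamma>)" by auto
  show False
  proof (cases "H \<inter> AGL1 = {id}")
    case True
    have "card \<gamma> * card (UNIV - \<gamma>) \<le> CARD('a) - 1"
      using card_le_if_transitive_on_pairs[OF _ trans] card_AGL1_free_subgroup_le[OF H(1,2) True]
      by simp
    moreover have "CARD('a) = card \<gamma> + card (UNIV - \<gamma>)"
      using card_mono[of UNIV \<gamma>] by (simp add: card_Diff_subset)
    moreover have "card \<gamma> + card (UNIV - \<gamma>) \<le> card \<gamma> * card (UNIV - \<gamma>)"
      using mult_le_mono1[OF k(1), of "card (UNIV - \<gamma>)"] mult_le_mono2[OF k(2), of "card \<gamma>"]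
      by linarith
    ultimately show False
      using k by linarith
  next
    case False
    moreover have "id \<in> H" using H(1) unfolding perm_subgroup_def by blast
    ultimately obtain h where "h \<in> H \<inter> AGL1" "h \<noteq> id" using id_AGL1 by blast
    then obtain c where "\<forall>g\<in>H. g c = c"
      using translation_free_common_fixed_point[OF H] by blast
    then show False
      using transitive_on_pairs_moves_point[OF trans _ k] by blast
  qed
qed

theorem lemma6p2:
  fixes L :: "('a::{finite,field} \<Rightarrow> 'a) set"
    and \<gamma> :: "'a set" and p e k :: nat
  assumes "prime p" and "e \<ge> 1" and "CARD('a) = p ^ e"
    and "perm_subgroup L" and "L \<subseteq> GammaL1"
    and "\<forall>x\<in>UNIV - {0}. \<forall>y\<in>UNIV - {0}. \<exists>f\<in>L. f x = y"
    and "card \<gamma> = k" and "1 \<le> k" and "k \<le> CARD('a) - 1"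
    and "transitive_on_pairs (set_stab (transl_ext L) \<gamma>) \<gamma> (UNIV - \<gamma>)"
  shows "k \<in> {1, CARD('a) - 1} \<longleftrightarrow> set_stab (transl_ext L) \<gamma> \<inter> transl_group = {id}"
proof -
  let ?H = "set_stab (transl_ext L) \<gamma>"
  have H: "perm_subgroup ?H"
    by (rule perm_subgroup_set_stab[OF perm_subgroup_transl_ext[OF assms(4,5)]])
  have H_semiaffine: "?H \<subseteq> transl_ext GammaL1"
    using transl_ext_mono[OF assms(5)] unfolding set_stab_def by blast
  have card_compl: "card (UNIV - \<gamma>) = CARD('a) - k"
    using assms(7) by (simp add: card_Diff_subset)
  show ?thesis
  proof
    assume "k \<in> {1, CARD('a) - 1}"
    then have "card \<gamma> = 1 \<or> card (UNIV - \<gamma>) = 1"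
      using assms(7,9) card_compl by auto
    then have "?H \<inter> transl_group \<subseteq> {id}"
      by (rule set_stab_inter_transl_group_trivial)
    moreover have "id \<in> ?H \<inter> transl_group"
      using H unfolding perm_subgroup_def transl_group_def by (auto intro!: exI[of _ 0])
    ultimately show "?H \<inter> transl_group = {id}" by blast
  next
    assume "?H \<inter> transl_group = {id}"
    then have "card \<gamma> \<le> 1 \<or> card (UNIV - \<gamma>) \<le> 1"
      by (rule translation_free_transitive_on_pairs[OF H H_semiaffine _ assms(10)])
    then show "k \<in> {1, CARD('a) - 1}"
      using assms(7-9) card_compl by auto
  qed
qed

end
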